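(* Let $\mathbf u:[0,\infty)\to(0,\infty)^N$ be a differentiable solution of the flux-differencing scheme $$\frac{du_i}{dt}=-2\sum_{j=1}^N D_{ij}\,F^\star(u_i,u_j),\qquad i=1,\dots,N.$$ (i) If $F^\star=F^\star_{\mathrm{geom}}$, then $\mathcal S(\mathbf u)=-2\sum_i H_{ii}\sqrt{u_i/a_i}$ is constant in time. (ii) If $F^\star=F^\star_{\log}$, then $\mathcal S(\mathbf u)=\sum_i H_{ii}\big(u_i\log(a_iu_i)-u_i\big)$ is constant in time.
   Context: $N\ge2$; $H=\operatorname{diag}(H_{ii})$ with $H_{ii}>0$; $Q\in\mathbb R^{N\times N}$ with $Q+Q^T=0$ and $Q\mathbf 1=\mathbf 0$ ($\mathbf 1$ the vector of ones); $D=H^{-1}Q$. Coefficients $a_i>0$ are fixed (time independent). Two-point fluxes: geometric $F^\star_{\mathrm{geom}}(u_i,u_j)=\sqrt{a_iu_i\,a_ju_j}$; logarithmic $F^\star_{\log}(u_i,u_j)=\dfrac{a_ju_j-a_iu_i}{\log(a_ju_j)-\log(a_iu_i)}$, with the value $a_iu_i$ when $a_iu_i=a_ju_j$. *)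

theory Defs
  imports "HOL-Analysis.Analysis"
begin

text \<open>Indices are the elements of a finite type 'n (so N = CARD('n)).
  Vectors in R^N are functions 'n => real; the diagonal matrix H is given by
  its diagonal entries H i; Q is an N x N matrix given as a function.\<close>

definition Dmat :: "('n \<Rightarrow> real) \<Rightarrow> ('n \<Rightarrow> 'n \<Rightarrow> real) \<Rightarrow> 'n \<Rightarrow> 'n \<Rightarrow> real" where
  "Dmat H Q i j = Q i j / H i"

definition Fgeom :: "('n \<Rightarrow> real) \<Rightarrow> 'n \<Rightarrow> 'n \<Rightarrow> real \<Rightarrow> real \<Rightarrow> real" where
  "Fgeom a i j ui uj = sqrt (a i * ui * (a j * uj))"

definition Flog :: "('n \<Rightarrow> real) \<Rightarrow> 'n \<Rightarrow> 'n \<Rightarrow> real \<Rightarrow> real \<Rightarrow> real" where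
  "Flog a i j ui uj =
     (if a i * ui = a j * uj then a i * ui
      else (a j * uj - a i * ui) / (ln (a j * uj) - ln (a i * ui)))"

definition is_solution ::
  "('n::finite \<Rightarrow> 'n \<Rightarrow> real \<Rightarrow> real \<Rightarrow> real) \<Rightarrow> ('n \<Rightarrow> real) \<Rightarrow> ('n \<Rightarrow> 'n \<Rightarrow> real)
     \<Rightarrow> (real \<Rightarrow> 'n \<Rightarrow> real) \<Rightarrow> bool" where
  "is_solution F H Q u \<longleftrightarrow>
     (\<forall>t\<ge>0. \<forall>i. u t i > 0) \<and>
     (\<forall>t\<ge>0. \<forall>i. ((\<lambda>s. u s i) has_real_derivative
                   (-2 * (\<Sum>j\<in>UNIV. Dmat H Q i j * F i j (u t i) (u t j))))
                 (at t within {0..}))"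

definition S_geom :: "('n::finite \<Rightarrow> real) \<Rightarrow> ('n \<Rightarrow> real) \<Rightarrow> ('n \<Rightarrow> real) \<Rightarrow> real" where
  "S_geom H a v = -2 * (\<Sum>i\<in>UNIV. H i * sqrt (v i / a i))"

definition S_log :: "('n::finite \<Rightarrow> real) \<Rightarrow> ('n \<Rightarrow> real) \<Rightarrow> ('n \<Rightarrow> real) \<Rightarrow> real" where
  "S_log H a v = (\<Sum>i\<in>UNIV. H i * (v i * ln (a i * v i) - v i))"

end

theory Submission
  imports Defs
begin

text \<open>Both fluxes satisfy Tadmor's entropy-conservation condition
  \<open>(w\<^sub>i - w\<^sub>j) F(u\<^sub>i, u\<^sub>j) = \<psi>\<^sub>i - \<psi>\<^sub>j\<close> for the entropy variables \<open>w = \<eta>'(u)\<close>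
  of the respective entropy: \<open>w = -1/sqrt(a u)\<close>, \<open>\<psi> = sqrt(a u)\<close> for the geometric flux and
  \<open>w = ln(a u)\<close>, \<open>\<psi> = a u\<close> for the logarithmic one.  Along a solution,
  \<open>dS/dt = -2 \<Sum>\<^sub>i\<^sub>j Q\<^sub>i\<^sub>j w\<^sub>i F\<^sub>i\<^sub>j\<close>; symmetrising with the skew-symmetry of \<open>Q\<close> and the
  symmetry of \<open>F\<close> turns this into \<open>-\<Sum>\<^sub>i\<^sub>j Q\<^sub>i\<^sub>j (\<psi>\<^sub>i - \<psi>\<^sub>j)\<close>, which vanishes because
  all row and column sums of \<open>Q\<close> are zero.\<close>

lemma has_real_derivative_zero_imp_constant_nonneg:
  fixes f :: "real \<Rightarrow> real"
  assumes "\<And>t. t \<ge> 0 \<Longrightarrow> (f has_real_derivative 0) (at t within {0..})" and "t \<ge> 0"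
  shows "f t = f 0"
proof -
  obtain c where "\<forall>x\<in>{0::real..}. f x = c"
    using has_field_derivative_zero_constant[of "{0::real..}" f] assms(1) by auto
  then show ?thesis using assms(2) by auto
qed

lemma skew_zero_row_sums_imp_zero_col_sums:
  fixes Q :: "'n::finite \<Rightarrow> 'n \<Rightarrow> real"
  assumes "\<forall>i j. Q i j + Q j i = 0" and "\<forall>i. (\<Sum>j\<in>UNIV. Q i j) = 0"
  shows "(\<Sum>i\<in>UNIV. Q i j) = 0"
proof -
  have "(\<Sum>i\<in>UNIV. Q i j) = (\<Sum>i\<in>UNIV. - Q j i)"
    using assms(1) by (intro sum.cong) (auto simp: eq_neg_iff_add_eq_0)
  then show ?thesis using assms(2) by (simp add: sum_negf)
qed

lemma entropy_conservative_flux_sum: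
  fixes Q F :: "'n::finite \<Rightarrow> 'n \<Rightarrow> real"
  assumes Qskew: "\<forall>i j. Q i j + Q j i = 0"
    and Qrow: "\<forall>i. (\<Sum>j\<in>UNIV. Q i j) = 0"
    and Fsym: "\<forall>i j. F i j = F j i"
    and Fcons: "\<forall>i j. (w i - w j) * F i j = \<psi> i - \<psi> j"
  shows "(\<Sum>i\<in>UNIV. \<Sum>j\<in>UNIV. Q i j * (w i * F i j)) = 0"
proof -
  define M where "M i j = Q i j * (w i * F i j)" for i j
  have pair: "M i j + M j i = Q i j * \<psi> i - Q i j * \<psi> j" for i j
  proof -
    have "Q j i = - Q i j" using Qskew by (simp add: eq_neg_iff_add_eq_0 add.commute)
    then have "M i j + M j i = Q i j * ((w i - w j) * F i j)"
      unfolding M_def using Fsym by (simp add: algebra_simps)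
    then show ?thesis by (simp add: Fcons right_diff_distrib)
  qed
  have rows: "(\<Sum>i\<in>UNIV. \<Sum>j\<in>UNIV. Q i j * \<psi> i) = 0"
    using Qrow by (simp add: sum_distrib_right[symmetric])
  have cols: "(\<Sum>i\<in>UNIV. \<Sum>j\<in>UNIV. Q i j * \<psi> j) = 0"
    using skew_zero_row_sums_imp_zero_col_sums[OF Qskew Qrow]
    by (subst sum.swap) (simp add: sum_distrib_right[symmetric])
  have "2 * (\<Sum>i\<in>UNIV. \<Sum>j\<in>UNIV. M i j)
      = (\<Sum>i\<in>UNIV. \<Sum>j\<in>UNIV. M i j) + (\<Sum>i\<in>UNIV. \<Sum>j\<in>UNIV. M j i)"
    by (subst (2) sum.swap) simp
  also have "\<dots> = (\<Sum>i\<in>UNIV. \<Sum>j\<in>UNIV. Q i j * \<psi> i - Q i j * \<psi> j)"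
    by (simp add: sum.distrib[symmetric] pair)
  also have "\<dots> = 0"
    using rows cols by (simp add: sum_subtractf)
  finally show ?thesis unfolding M_def by simp
qed

lemma entropy_conserved:
  fixes H :: "'n::finite \<Rightarrow> real" and Q :: "'n \<Rightarrow> 'n \<Rightarrow> real"
  assumes Hnz: "\<forall>i. H i \<noteq> 0"
    and Qskew: "\<forall>i j. Q i j + Q j i = 0"
    and Qrow: "\<forall>i. (\<Sum>j\<in>UNIV. Q i j) = 0"
    and \<eta>': "\<And>i x. x > 0 \<Longrightarrow> (\<eta> i has_real_derivative w i x) (at x)"
    and Fsym: "\<And>i j x y. x > 0 \<Longrightarrow> y > 0 \<Longrightarrow> F i j x y = F j i y x"
    and Fcons: "\<And>i j x y. x > 0 \<Longrightarrow> y > 0 \<Longrightarrow> (w i x - w j y) * F i j x y = \<psi> i x - \<psi> j y"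
    and sol: "is_solution F H Q u" and "t \<ge> 0"
  shows "(\<Sum>i\<in>UNIV. H i * \<eta> i (u t i)) = (\<Sum>i\<in>UNIV. H i * \<eta> i (u 0 i))"
proof (rule has_real_derivative_zero_imp_constant_nonneg[OF _ \<open>t \<ge> 0\<close>])
  fix t :: real assume "t \<ge> 0"
  define f where "f i j = F i j (u t i) (u t j)" for i j
  have pos: "u t i > 0" for i
    using sol \<open>t \<ge> 0\<close> unfolding is_solution_def by auto
  have "((\<lambda>s. \<eta> i (u s i)) has_real_derivative
          w i (u t i) * (-2 * (\<Sum>j\<in>UNIV. Dmat H Q i j * f i j))) (at t within {0..})" for i
  proof (rule DERIV_chain2[where f = "\<eta> i" and g = "\<lambda>s. u s i"])
    show "(\<eta> i has_real_derivative w i (u t i)) (at (u t i))"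
      using \<eta>' pos .
    show "((\<lambda>s. u s i) has_real_derivative -2 * (\<Sum>j\<in>UNIV. Dmat H Q i j * f i j))
        (at t within {0..})"
      using sol \<open>t \<ge> 0\<close> unfolding is_solution_def f_def by blast
  qed
  then have "((\<lambda>s. \<Sum>i\<in>UNIV. H i * \<eta> i (u s i)) has_real_derivative
      (\<Sum>i\<in>UNIV. H i * (w i (u t i) * (-2 * (\<Sum>j\<in>UNIV. Dmat H Q i j * f i j)))))
      (at t within {0..})"
    by (intro DERIV_sum DERIV_cmult)
  also have "(\<Sum>i\<in>UNIV. H i * (w i (u t i) * (-2 * (\<Sum>j\<in>UNIV. Dmat H Q i j * f i j))))
      = -2 * (\<Sum>i\<in>UNIV. \<Sum>j\<in>UNIV. Q i j * (w i (u t i) * f i j))"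
    using Hnz unfolding Dmat_def
    by (simp add: sum_distrib_left sum_distrib_right algebra_simps)
  also have "(\<Sum>i\<in>UNIV. \<Sum>j\<in>UNIV. Q i j * (w i (u t i) * f i j)) = 0"
    by (rule entropy_conservative_flux_sum[OF Qskew Qrow, where \<psi> = "\<lambda>i. \<psi> i (u t i)"])
       (simp_all add: f_def Fsym Fcons pos)
  finally show "((\<lambda>s. \<Sum>i\<in>UNIV. H i * \<eta> i (u s i)) has_real_derivative 0) (at t within {0..})"
    by simp
qed

lemma has_real_derivative_geom_entropy:
  assumes "a > 0" "x > 0"
  shows "((\<lambda>x. -2 * sqrt (x / a)) has_real_derivative -1 / sqrt (a * x)) (at x)"
proof -
  have "((\<lambda>x. -2 * sqrt (x / a)) has_real_derivative -2 * (inverse (sqrt (x / a)) / 2 * (1 / a))) (at x)"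
    using assms by (intro DERIV_cmult DERIV_chain2[OF DERIV_real_sqrt] DERIV_cdivide DERIV_ident) auto
  moreover have "a * sqrt (x / a) = sqrt (a * x)"
    using assms by (simp add: real_sqrt_divide real_sqrt_mult field_simps)
  ultimately show ?thesis
    using assms by (simp add: field_simps)
qed

lemma Fgeom_sym: "Fgeom a i j x y = Fgeom a j i y x"
  unfolding Fgeom_def by (simp add: mult.commute)

lemma Fgeom_entropy_conservative:
  assumes "a i > 0" "a j > 0" "x > 0" "y > 0"
  shows "(-1 / sqrt (a i * x) - -1 / sqrt (a j * y)) * Fgeom a i j x y
       = sqrt (a i * x) - sqrt (a j * y)"
  using assms unfolding Fgeom_def by (simp add: real_sqrt_mult field_simps)

lemma has_real_derivative_log_entropy:
  assumes "a > 0" "x > 0"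
  shows "((\<lambda>x. x * ln (a * x) - x) has_real_derivative ln (a * x)) (at x)"
  using assms by (auto intro!: derivative_eq_intros simp: field_simps)

lemma Flog_sym: "Flog a i j x y = Flog a j i y x"
proof -
  have "(p - q) / (r - s) = (q - p) / (s - r)" for p q r s :: real
    by (metis minus_diff_eq minus_divide_divide)
  then show ?thesis unfolding Flog_def by auto
qed

lemma Flog_entropy_conservative:
  assumes "a i * x > 0" "a j * y > 0"
  shows "(ln (a i * x) - ln (a j * y)) * Flog a i j x y = a i * x - a j * y"
proof (cases "a i * x = a j * y")
  case False
  then have "ln (a j * y) - ln (a i * x) \<noteq> 0" using assms by simp
  then show ?thesis using False unfolding Flog_def by (simp add: field_simps)
qed (simp add: Flog_def)

lemma S_geom_conserved:
  assumes Hnz: "\<forall>i. H i \<noteq> 0"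
    and Qskew: "\<forall>i j. Q i j + Q j i = 0"
    and Qrow: "\<forall>i. (\<Sum>j\<in>UNIV. Q i j) = 0"
    and apos: "\<forall>i. a i > 0"
    and sol: "is_solution (Fgeom a) H Q u" and "t \<ge> 0"
  shows "S_geom H a (u t) = S_geom H a (u 0)"
proof -
  have "(\<Sum>i\<in>UNIV. H i * (-2 * sqrt (u t i / a i)))
      = (\<Sum>i\<in>UNIV. H i * (-2 * sqrt (u 0 i / a i)))"
  proof (rule entropy_conserved[where \<eta> = "\<lambda>i x. -2 * sqrt (x / a i)"
        and w = "\<lambda>i x. -1 / sqrt (a i * x)" and \<psi> = "\<lambda>i x. sqrt (a i * x)",
        OF Hnz Qskew Qrow _ Fgeom_sym _ sol \<open>t \<ge> 0\<close>])
    show "((\<lambda>x. -2 * sqrt (x / a i)) has_real_derivative -1 / sqrt (a i * x)) (at x)"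
      if "x > 0" for i x
      using apos that by (intro has_real_derivative_geom_entropy) auto
    show "(-1 / sqrt (a i * x) - -1 / sqrt (a j * y)) * Fgeom a i j x y
        = sqrt (a i * x) - sqrt (a j * y)" if "x > 0" "y > 0" for i j x y
      using apos that by (intro Fgeom_entropy_conservative) auto
  qed
  then show ?thesis
    unfolding S_geom_def by (simp add: sum_distrib_left algebra_simps)
qed

lemma S_log_conserved:
  assumes Hnz: "\<forall>i. H i \<noteq> 0"
    and Qskew: "\<forall>i j. Q i j + Q j i = 0"
    and Qrow: "\<forall>i. (\<Sum>j\<in>UNIV. Q i j) = 0"
    and apos: "\<forall>i. a i > 0"
    and sol: "is_solution (Flog a) H Q u" and "t \<ge> 0"
  shows "S_log H a (u t) = S_log H a (u 0)"
  unfolding S_log_def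
proof (rule entropy_conserved[where \<eta> = "\<lambda>i x. x * ln (a i * x) - x"
      and w = "\<lambda>i x. ln (a i * x)" and \<psi> = "\<lambda>i x. a i * x",
      OF Hnz Qskew Qrow _ Flog_sym _ sol \<open>t \<ge> 0\<close>])
  show "((\<lambda>x. x * ln (a i * x) - x) has_real_derivative ln (a i * x)) (at x)"
    if "x > 0" for i x
    using apos that by (intro has_real_derivative_log_entropy) auto
  show "(ln (a i * x) - ln (a j * y)) * Flog a i j x y = a i * x - a j * y"
    if "x > 0" "y > 0" for i j x y
    using apos that by (intro Flog_entropy_conservative) auto
qed

theorem mainTheorem2:
  fixes H :: "'n::finite \<Rightarrow> real" and Q :: "'n \<Rightarrow> 'n \<Rightarrow> real" and a :: "'n \<Rightarrow> real"
  assumes N2: "CARD('n) \<ge> 2"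
    and Hpos: "\<forall>i. H i > 0"
    and Qskew: "\<forall>i j. Q i j + Q j i = 0"
    and Qrow: "\<forall>i. (\<Sum>j\<in>UNIV. Q i j) = 0"
    and apos: "\<forall>i. a i > 0"
  shows "(\<forall>u. is_solution (Fgeom a) H Q u \<longrightarrow> (\<forall>t\<ge>0. S_geom H a (u t) = S_geom H a (u 0)))
       \<and> (\<forall>u. is_solution (Flog a) H Q u \<longrightarrow> (\<forall>t\<ge>0. S_log H a (u t) = S_log H a (u 0)))"
proof -
  have Hnz: "\<forall>i. H i \<noteq> 0"
    using Hpos by (simp add: less_imp_neq[symmetric])
  show ?thesis
    using S_geom_conserved[OF Hnz Qskew Qrow apos] S_log_conserved[OF Hnz Qskew Qrow apos]
    by blast
qed

end
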